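(* For all closed terms $t_0,t_0'$, if $t_0\to t_0'$ then $t_0\approx_{\emptyset}t_0'$.
   Context: Terms of $\lambda_S$: $t ::= x \mid \lambda x.t \mid t\,t \mid \mathcal{S}k.t \mid \langle t\rangle$ (shift binds $k$; $\langle\cdot\rangle$ reset), up to $\alpha$-conversion. Values $v::=\lambda x.t$. Pure contexts $E ::= \Box \mid v\,E \mid E\,t$; evaluation contexts $F ::= \Box \mid v\,F \mid F\,t \mid \langle F\rangle$. Reduction: $F[(\lambda x.t)v]\to F[t\{v/x\}]$; $F[\langle E[\mathcal Sk.t]\rangle]\to F[\langle t\{\lambda x.\langle E[x]\rangle/k\}\rangle]$ ($x\notin\mathrm{fv}(E)$); $F[\langle v\rangle]\to F[v]$; $\to^*$ reflexive-transitive closure. Stuck: not a value and irreducible; normal form: value or stuck. Closures: for $R$ a relation on closed terms, $\widetilde R$ is the smallest relation containing $R$, all $(x,x)$, closed under all term constructors, restricted to closed terms; $\widehat R$ is the smallest relation on closed evaluation contexts with $\Box\widehat R\Box$, $v_0F_0\widehat Rv_1F_1$ if $F_0\widehat RF_1,v_0\widetilde Rv_1$; $F_0t_0\widehat RF_1t_1$ if $F_0\widehat RF_1,t_0\widetilde Rt_1$; $\langle F_0\rangle\widehat R\langle F_1\rangle$ if $F_0\widehat RF_1$. An environment $\mathcal E$ is a relation on closed normal forms relating values only with values and stuck terms only with stuck terms; an environmental relation $\mathcal X$ is a set of environments and triples $(\mathcal E,t_0,t_1)$ with $t_0,t_1$ closed, written $t_0\mathcal X_{\mathcal E}t_1$.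 $\mathcal X$ is an environmental bisimulation if (1) whenever $t_0\mathcal X_{\mathcal E}t_1$: (a) $t_0\to t_0'$ implies $t_1\to^*t_1'$ with $t_0'\mathcal X_{\mathcal E}t_1'$; (b) if $t_0$ is a value $v_0$ then $t_1\to^*v_1$ with $\mathcal E\cup\{(v_0,v_1)\}\in\mathcal X$; (c) if $t_0$ is stuck then $t_1\to^*t_1'$ stuck with $\mathcal E\cup\{(t_0,t_1')\}\in\mathcal X$; (d) symmetric conditions; (2) whenever $\mathcal E\in\mathcal X$: (a) $(\lambda x.t_0)\mathcal E(\lambda x.t_1)$, $v_0\widetilde{\mathcal E}v_1$ imply $t_0\{v_0/x\}\mathcal X_{\mathcal E}t_1\{v_1/x\}$; (b) $E_0[\mathcal Sk.t_0]\mathcal EE_1[\mathcal Sk.t_1]$, pure $E_0'\widehat{\mathcal E}E_1'$ imply $\langle t_0\{\lambda x.\langle E_0'[E_0[x]]\rangle/k\}\rangle\mathcal X_{\mathcal E}\langle t_1\{\lambda x.\langle E_1'[E_1[x]]\rangle/k\}\rangle$ ($x$ fresh). $\approx$ is the largest environmental bisimulation; $t_0\approx_{\emptyset}t_1$ means $(\emptyset,t_0,t_1)\in\approx$. *)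

theory Defs
  imports Main
begin

section \<open>Terms of lambda_S (de Bruijn indices: terms up to alpha-conversion)\<close>

text \<open>Lam t binds index 0 in t; Shift t binds the continuation variable k as index 0 in t.\<close>
datatype trm = Var nat | Lam trm | App trm trm | Shift trm | Reset trm

fun lift :: "nat \<Rightarrow> trm \<Rightarrow> trm" where
  "lift k (Var n) = (if n < k then Var n else Var (Suc n))"
| "lift k (Lam t) = Lam (lift (Suc k) t)"
| "lift k (App a b) = App (lift k a) (lift k b)"
| "lift k (Shift t) = Shift (lift (Suc k) t)"
| "lift k (Reset t) = Reset (lift k t)"

text \<open>subst t k s = t{s/k}, where variables above k are decremented (binder removed).\<close>
fun subst :: "trm \<Rightarrow> nat \<Rightarrow> trm \<Rightarrow> trm" where
  "subst (Var n) k s = (if n < k then Var n else if n = k then s else Var (n - 1))"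
| "subst (Lam t) k s = Lam (subst t (Suc k) (lift 0 s))"
| "subst (App a b) k s = App (subst a k s) (subst b k s)"
| "subst (Shift t) k s = Shift (subst t (Suc k) (lift 0 s))"
| "subst (Reset t) k s = Reset (subst t k s)"

fun closed_at :: "nat \<Rightarrow> trm \<Rightarrow> bool" where
  "closed_at k (Var n) = (n < k)"
| "closed_at k (Lam t) = closed_at (Suc k) t"
| "closed_at k (App a b) = (closed_at k a \<and> closed_at k b)"
| "closed_at k (Shift t) = closed_at (Suc k) t"
| "closed_at k (Reset t) = closed_at k t"

definition closed :: "trm \<Rightarrow> bool" where
  "closed t = closed_at 0 t"

fun is_value :: "trm \<Rightarrow> bool" where
  "is_value (Lam t) = True"
| "is_value _ = False"

datatype ctx = Hole | CAppR trm ctx | CAppL ctx trm | CReset ctx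

fun plug :: "ctx \<Rightarrow> trm \<Rightarrow> trm" where
  "plug Hole u = u"
| "plug (CAppR v E) u = App v (plug E u)"
| "plug (CAppL E t) u = App (plug E u) t"
| "plug (CReset E) u = Reset (plug E u)"

fun liftc :: "nat \<Rightarrow> ctx \<Rightarrow> ctx" where
  "liftc k Hole = Hole"
| "liftc k (CAppR v E) = CAppR (lift k v) (liftc k E)"
| "liftc k (CAppL E t) = CAppL (liftc k E) (lift k t)"
| "liftc k (CReset E) = CReset (liftc k E)"

fun is_pure :: "ctx \<Rightarrow> bool" where
  "is_pure Hole = True"
| "is_pure (CAppR v E) = (is_value v \<and> is_pure E)"
| "is_pure (CAppL E t) = is_pure E"
| "is_pure (CReset E) = False"

fun is_ectx :: "ctx \<Rightarrow> bool" where
  "is_ectx Hole = True"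
| "is_ectx (CAppR v E) = (is_value v \<and> is_ectx E)"
| "is_ectx (CAppL E t) = is_ectx E"
| "is_ectx (CReset E) = is_ectx E"

fun closed_ctx :: "ctx \<Rightarrow> bool" where
  "closed_ctx Hole = True"
| "closed_ctx (CAppR v E) = (closed v \<and> closed_ctx E)"
| "closed_ctx (CAppL E t) = (closed_ctx E \<and> closed t)"
| "closed_ctx (CReset E) = closed_ctx E"

inductive step :: "trm \<Rightarrow> trm \<Rightarrow> bool" where
  beta: "\<lbrakk>is_ectx F; is_value v\<rbrakk> \<Longrightarrow>
          step (plug F (App (Lam t) v)) (plug F (subst t 0 v))"
| shift: "\<lbrakk>is_ectx F; is_pure E\<rbrakk> \<Longrightarrow>
          step (plug F (Reset (plug E (Shift t))))
               (plug F (Reset (subst t 0 (Lam (Reset (plug (liftc 0 E) (Var 0)))))))"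
| reset: "\<lbrakk>is_ectx F; is_value v\<rbrakk> \<Longrightarrow> step (plug F (Reset v)) (plug F v)"

abbreviation steps :: "trm \<Rightarrow> trm \<Rightarrow> bool" where
  "steps \<equiv> step\<^sup>*\<^sup>*"

definition stuck :: "trm \<Rightarrow> bool" where
  "stuck t \<longleftrightarrow> \<not> is_value t \<and> (\<nexists>t'. step t t')"

definition normal_form :: "trm \<Rightarrow> bool" where
  "normal_form t \<longleftrightarrow> is_value t \<or> stuck t"

inductive tclo :: "(trm \<times> trm) set \<Rightarrow> trm \<Rightarrow> trm \<Rightarrow> bool" for R where
  base: "(a, b) \<in> R \<Longrightarrow> tclo R a b"
| var: "tclo R (Var n) (Var n)"
| lam: "tclo R a b \<Longrightarrow> tclo R (Lam a) (Lam b)"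
| app: "tclo R a b \<Longrightarrow> tclo R c d \<Longrightarrow> tclo R (App a c) (App b d)"
| shft: "tclo R a b \<Longrightarrow> tclo R (Shift a) (Shift b)"
| rst: "tclo R a b \<Longrightarrow> tclo R (Reset a) (Reset b)"

definition tilde :: "(trm \<times> trm) set \<Rightarrow> (trm \<times> trm) set" where
  "tilde R = {(a, b). tclo R a b \<and> closed a \<and> closed b}"

inductive hclo :: "(trm \<times> trm) set \<Rightarrow> ctx \<Rightarrow> ctx \<Rightarrow> bool" for R where
  hole: "hclo R Hole Hole"
| appr: "\<lbrakk>hclo R F0 F1; (v0, v1) \<in> tilde R; is_value v0; is_value v1\<rbrakk>
          \<Longrightarrow> hclo R (CAppR v0 F0) (CAppR v1 F1)"
| appl: "\<lbrakk>hclo R F0 F1; (t0, t1) \<in> tilde R\<rbrakk> \<Longrightarrow> hclo R (CAppL F0 t0) (CAppL F1 t1)"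
| rst: "hclo R F0 F1 \<Longrightarrow> hclo R (CReset F0) (CReset F1)"

definition hat :: "(trm \<times> trm) set \<Rightarrow> (ctx \<times> ctx) set" where
  "hat R = {(F0, F1). hclo R F0 F1 \<and> is_ectx F0 \<and> is_ectx F1
                      \<and> closed_ctx F0 \<and> closed_ctx F1}"

definition is_env :: "(trm \<times> trm) set \<Rightarrow> bool" where
  "is_env E \<longleftrightarrow> (\<forall>(a, b) \<in> E. closed a \<and> closed b \<and>
       ((is_value a \<and> is_value b) \<or> (stuck a \<and> stuck b)))"

text \<open>An environmental relation is represented by its set of environments Es
  together with its set of triples T.\<close>
definition env_relation :: "(trm \<times> trm) set set \<Rightarrow> ((trm \<times> trm) set \<times> trm \<times> trm) set \<Rightarrow> bool" where
  "env_relation Es T \<longleftrightarrow> (\<forall>E \<in> Es. is_env E) \<and>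
      (\<forall>(E, t0, t1) \<in> T. is_env E \<and> closed t0 \<and> closed t1)"

definition cont :: "ctx \<Rightarrow> ctx \<Rightarrow> trm" where
  "cont E' E = Lam (Reset (plug (liftc 0 E') (plug (liftc 0 E) (Var 0))))"

definition env_bisim :: "(trm \<times> trm) set set \<Rightarrow> ((trm \<times> trm) set \<times> trm \<times> trm) set \<Rightarrow> bool" where
  "env_bisim Es T \<longleftrightarrow> env_relation Es T \<and>
     (\<forall>(E, t0, t1) \<in> T.
        (\<forall>t0'. step t0 t0' \<longrightarrow> (\<exists>t1'. steps t1 t1' \<and> (E, t0', t1') \<in> T)) \<and>
        (is_value t0 \<longrightarrow> (\<exists>v1. steps t1 v1 \<and> is_value v1 \<and> insert (t0, v1) E \<in> Es)) \<and>
        (stuck t0 \<longrightarrow> (\<exists>t1'. steps t1 t1' \<and> stuck t1' \<and> insert (t0, t1') E \<in> Es)) \<and>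
        (\<forall>t1'. step t1 t1' \<longrightarrow> (\<exists>t0'. steps t0 t0' \<and> (E, t0', t1') \<in> T)) \<and>
        (is_value t1 \<longrightarrow> (\<exists>v0. steps t0 v0 \<and> is_value v0 \<and> insert (v0, t1) E \<in> Es)) \<and>
        (stuck t1 \<longrightarrow> (\<exists>t0'. steps t0 t0' \<and> stuck t0' \<and> insert (t0', t1) E \<in> Es))) \<and>
     (\<forall>E \<in> Es.
        (\<forall>t0 t1 v0 v1. (Lam t0, Lam t1) \<in> E \<longrightarrow> (v0, v1) \<in> tilde E \<longrightarrow>
            is_value v0 \<longrightarrow> is_value v1 \<longrightarrow> (E, subst t0 0 v0, subst t1 0 v1) \<in> T) \<and>
        (\<forall>E0 E1 t0 t1 E0' E1'. is_pure E0 \<longrightarrow> is_pure E1 \<longrightarrow>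
            (plug E0 (Shift t0), plug E1 (Shift t1)) \<in> E \<longrightarrow>
            is_pure E0' \<longrightarrow> is_pure E1' \<longrightarrow> (E0', E1') \<in> hat E \<longrightarrow>
            (E, Reset (subst t0 0 (cont E0' E0)), Reset (subst t1 0 (cont E1' E1))) \<in> T))"

text \<open>The largest environmental bisimulation: union of all of them (componentwise).
  Its triple component:\<close>
definition approx_triples :: "((trm \<times> trm) set \<times> trm \<times> trm) set" where
  "approx_triples = \<Union>{T. \<exists>Es. env_bisim Es T}"

definition approx_empty :: "trm \<Rightarrow> trm \<Rightarrow> bool" where
  "approx_empty t0 t1 \<longleftrightarrow> ({}, t0, t1) \<in> approx_triples"

end

theory Submission
  imports Defs
begin

text \<open>Reduction is deterministic: a term decomposes in at most one way as an evaluation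
  context filled with a redex, and each redex has a single contractum. Hence two closed
  terms with a common reduct are related by the environmental relation whose environments
  are diagonal on closed normal forms and whose triples are all joinable pairs; the only
  way a step can be matched is by the other side continuing towards the common reduct,
  and on diagonal environments the closures of the environment are again diagonal.\<close>

inductive contract :: "trm \<Rightarrow> trm \<Rightarrow> bool" where
  beta: "is_value v \<Longrightarrow> contract (App (Lam t) v) (subst t 0 v)"
| shift: "is_pure E \<Longrightarrow>
    contract (Reset (plug E (Shift t))) (Reset (subst t 0 (Lam (Reset (plug (liftc 0 E) (Var 0))))))"
| reset: "is_value v \<Longrightarrow> contract (Reset v) v"

lemma is_value_plug_iff [simp]: "is_value (plug F r) \<longleftrightarrow> F = Hole \<and> is_value r"
  by (cases F) auto

lemma plug_eq_Lam_iff [simp]: "plug F r = Lam t \<longleftrightarrow> F = Hole \<and> r = Lam t"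
  by (cases F) auto

lemma contract_not_value: "contract r s \<Longrightarrow> \<not> is_value r"
  by (induction rule: contract.induct) auto

lemma plug_contract_neq_plug_pure_Shift:
  assumes "is_pure E" "is_ectx F" "contract r s"
  shows "plug F r \<noteq> plug E (Shift t)"
  using assms
proof (induction E arbitrary: F)
  case Hole then show ?case by (cases F) (auto elim: contract.cases)
next
  case (CAppR v E) then show ?case by (cases F) (auto elim: contract.cases dest: contract_not_value)
next
  case (CAppL E u) then show ?case by (cases F) (auto elim: contract.cases dest: contract_not_value)
qed simp

lemma plug_pure_Shift_inject:
  "is_pure E1 \<Longrightarrow> is_pure E2 \<Longrightarrow> plug E1 (Shift t1) = plug E2 (Shift t2) \<Longrightarrow> E1 = E2 \<and> t1 = t2"
proof (induction E1 arbitrary: E2)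
  case Hole then show ?case by (cases E2) auto
next
  case (CAppR v E) then show ?case by (cases E2) auto
next
  case (CAppL E u) then show ?case by (cases E2) auto
qed simp

lemma contract_plug_ectx_imp_Hole:
  assumes "is_ectx F" "contract r s" "contract (plug F r) s'"
  shows "F = Hole"
proof (cases F)
  case (CReset F')
  then have "plug F' r \<noteq> plug E (Shift t)" if "is_pure E" for E t
    using assms that plug_contract_neq_plug_pure_Shift by simp
  with assms CReset show ?thesis by (auto elim!: contract.cases dest: contract_not_value)
qed (use assms in \<open>auto elim!: contract.cases dest: contract_not_value\<close>)

lemma ectx_decomposition_unique:
  "is_ectx F1 \<Longrightarrow> is_ectx F2 \<Longrightarrow> contract r1 s1 \<Longrightarrow> contract r2 s2 \<Longrightarrow>
   plug F1 r1 = plug F2 r2 \<Longrightarrow> F1 = F2 \<and> r1 = r2"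
proof (induction F1 arbitrary: F2)
  case Hole then show ?case by (metis contract_plug_ectx_imp_Hole plug.simps(1))
next
  case (CAppR v F)
  then have "F2 \<noteq> Hole" by (metis contract_plug_ectx_imp_Hole plug.simps(1) ctx.distinct(1))
  with CAppR show ?case by (cases F2) (auto dest: contract_not_value)
next
  case (CAppL F u)
  then have "F2 \<noteq> Hole" by (metis contract_plug_ectx_imp_Hole plug.simps(1) ctx.distinct(3))
  with CAppL show ?case by (cases F2) (auto dest: contract_not_value)
next
  case (CReset F)
  then have "F2 \<noteq> Hole" by (metis contract_plug_ectx_imp_Hole plug.simps(1) ctx.distinct(5))
  with CReset show ?case by (cases F2) auto
qed

lemma contract_deterministic: "contract r s \<Longrightarrow> contract r s' \<Longrightarrow> s = s'"
proof (induction rule: contract.induct)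
  case (beta v t)
  from beta.prems show ?case by cases simp_all
next
  case (shift E t)
  from shift.prems show ?case
  proof cases
    case (shift E' t')
    with shift.hyps show ?thesis by (auto dest: plug_pure_Shift_inject)
  qed (use shift.hyps in simp)
next
  case (reset v)
  from reset.prems show ?case by cases (use reset.hyps in simp_all)
qed

lemma step_imp_contract:
  "step a b \<Longrightarrow> \<exists>F r s. is_ectx F \<and> contract r s \<and> a = plug F r \<and> b = plug F s"
  by (induction rule: step.induct) (blast intro: contract.intros)+

lemma step_deterministic: "step a b \<Longrightarrow> step a c \<Longrightarrow> b = c"
  by (metis step_imp_contract ectx_decomposition_unique contract_deterministic)

lemma value_no_step: "is_value a \<Longrightarrow> \<not> step a b"
  by (metis step_imp_contract is_value_plug_iff contract_not_value)

lemma steps_from_normal_form: "steps a c \<Longrightarrow> normal_form a \<Longrightarrow> c = a"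
  by (erule converse_rtranclpE) (auto simp: normal_form_def stuck_def dest: value_no_step)

lemma steps_step_confluent: "steps a c \<Longrightarrow> step a a' \<Longrightarrow> a = c \<or> steps a' c"
  by (erule converse_rtranclpE) (auto dest: step_deterministic)

fun closed_at_ctx :: "nat \<Rightarrow> ctx \<Rightarrow> bool" where
  "closed_at_ctx k Hole = True"
| "closed_at_ctx k (CAppR v E) = (closed_at k v \<and> closed_at_ctx k E)"
| "closed_at_ctx k (CAppL E t) = (closed_at_ctx k E \<and> closed_at k t)"
| "closed_at_ctx k (CReset E) = closed_at_ctx k E"

lemma closed_ctx_eq_closed_at_ctx_0: "closed_ctx E = closed_at_ctx 0 E"
  by (induction E) (auto simp: closed_def)

lemma closed_at_plug [simp]: "closed_at k (plug F u) \<longleftrightarrow> closed_at_ctx k F \<and> closed_at k u"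
  by (induction F) auto

lemma closed_at_lift: "closed_at n s \<Longrightarrow> closed_at (Suc n) (lift k s)"
  by (induction s arbitrary: n k) auto

lemma closed_at_ctx_liftc: "closed_at_ctx n E \<Longrightarrow> closed_at_ctx (Suc n) (liftc k E)"
  by (induction E) (auto simp: closed_at_lift)

lemma closed_at_subst:
  "closed_at (Suc n) t \<Longrightarrow> k \<le> n \<Longrightarrow> closed_at n s \<Longrightarrow> closed_at n (subst t k s)"
  by (induction t arbitrary: n k s) (auto simp: closed_at_lift)

lemma step_preserves_closed: "step a b \<Longrightarrow> closed a \<Longrightarrow> closed b"
  unfolding closed_def
  by (induction rule: step.induct) (auto intro!: closed_at_subst closed_at_ctx_liftc)

lemma tclo_subset_Id: "tclo R a b \<Longrightarrow> R \<subseteq> Id \<Longrightarrow> a = b"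
  by (induction rule: tclo.induct) auto

lemma hclo_subset_Id: "hclo R F0 F1 \<Longrightarrow> R \<subseteq> Id \<Longrightarrow> F0 = F1"
  by (induction rule: hclo.induct) (auto simp: tilde_def dest: tclo_subset_Id)

definition diagonal_envs :: "(trm \<times> trm) set set" where
  "diagonal_envs = {E. E \<subseteq> Id \<and> is_env E}"

definition joinable_triples :: "((trm \<times> trm) set \<times> trm \<times> trm) set" where
  "joinable_triples = {(E, a, b). E \<in> diagonal_envs \<and> closed a \<and> closed b \<and>
                                  (\<exists>c. steps a c \<and> steps b c)}"

lemma joinable_triples_sym: "(E, a, b) \<in> joinable_triples \<Longrightarrow> (E, b, a) \<in> joinable_triples"
  unfolding joinable_triples_def by blast

lemma joinable_triples_step:
  assumes "(E, a, b) \<in> joinable_triples" "step a a'"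
  shows "\<exists>b'. steps b b' \<and> (E, a', b') \<in> joinable_triples"
proof -
  obtain c where E: "E \<in> diagonal_envs" and "closed a" "closed b"
    and ac: "steps a c" and bc: "steps b c"
    using assms(1) unfolding joinable_triples_def by blast
  then have "closed a'" using assms(2) step_preserves_closed by blast
  from steps_step_confluent[OF ac assms(2)] show ?thesis
  proof
    assume "a = c"
    \<comment> \<open>\<open>a\<close> is already the common reduct, so \<open>b\<close> catches up and then takes the same step\<close>
    with bc assms(2) have "steps b a'" by simp
    then show ?thesis
      using E \<open>closed a'\<close> unfolding joinable_triples_def by blast
  next
    assume "steps a' c"
    then show ?thesis
      using E \<open>closed a'\<close> \<open>closed b\<close> bc unfolding joinable_triples_def by blast
  qed
qed

lemma joinable_triples_normal_form:
  assumes "(E, a, b) \<in> joinable_triples" "normal_form a"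
  shows "steps b a \<and> insert (a, a) E \<in> diagonal_envs"
  using assms steps_from_normal_form
  unfolding joinable_triples_def diagonal_envs_def is_env_def normal_form_def
  by auto

lemma diagonal_env_Lam:
  assumes "E \<in> diagonal_envs" "(Lam t0, Lam t1) \<in> E" "(v0, v1) \<in> tilde E"
  shows "(E, subst t0 0 v0, subst t1 0 v1) \<in> joinable_triples"
proof -
  have "E \<subseteq> Id" "is_env E" using assms(1) by (auto simp: diagonal_envs_def)
  then have "t0 = t1" "v0 = v1" "closed v0" "closed (Lam t0)"
    using assms(2,3) tclo_subset_Id by (auto simp: tilde_def is_env_def)
  then show ?thesis
    using assms(1) unfolding joinable_triples_def closed_def by (auto intro!: closed_at_subst)
qed

lemma diagonal_env_Shift:
  assumes "E \<in> diagonal_envs" "is_pure E0" "is_pure E1"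
    and "(plug E0 (Shift t0), plug E1 (Shift t1)) \<in> E" "(E0', E1') \<in> hat E"
  shows "(E, Reset (subst t0 0 (cont E0' E0)), Reset (subst t1 0 (cont E1' E1))) \<in> joinable_triples"
proof -
  have "E \<subseteq> Id" "is_env E" using assms(1) by (auto simp: diagonal_envs_def)
  then have "plug E0 (Shift t0) = plug E1 (Shift t1)" "closed (plug E0 (Shift t0))"
    using assms(4) by (auto simp: is_env_def)
  then have "E0 = E1" "t0 = t1"
    using assms(2,3) plug_pure_Shift_inject by blast+
  moreover have "E0' = E1'" "closed_ctx E0'"
    using assms(5) \<open>E \<subseteq> Id\<close> hclo_subset_Id by (auto simp: hat_def)
  ultimately show ?thesis
    using assms(1) \<open>closed (plug E0 (Shift t0))\<close>
    unfolding joinable_triples_def closed_def cont_def closed_ctx_eq_closed_at_ctx_0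
    by (auto intro!: closed_at_subst closed_at_ctx_liftc)
qed

lemma env_bisim_joinable: "env_bisim diagonal_envs joinable_triples"
  unfolding env_bisim_def
proof (intro conjI ballI, goal_cases)
  case 1
  show ?case unfolding env_relation_def diagonal_envs_def joinable_triples_def by auto
next
  case (2 x)
  then obtain E a b where x: "x = (E, a, b)" and ab: "(E, a, b) \<in> joinable_triples"
    by (cases x) auto
  note ba = joinable_triples_sym[OF ab]
  show ?case
    unfolding x prod.case
    using joinable_triples_step[OF ab] joinable_triples_step[OF ba]
      joinable_triples_normal_form[OF ab] joinable_triples_normal_form[OF ba]
    by (auto simp: normal_form_def) (meson joinable_triples_sym)
next
  case 3
  then show ?case by (blast intro: diagonal_env_Lam)
next
  case 4
  then show ?case by (blast intro: diagonal_env_Shift)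
qed

lemma joinable_approx_empty:
  assumes "closed a" "closed b" "steps a c" "steps b c"
  shows "approx_empty a b"
proof -
  have "({}, a, b) \<in> joinable_triples"
    using assms unfolding joinable_triples_def diagonal_envs_def is_env_def by auto
  then show ?thesis
    using env_bisim_joinable unfolding approx_empty_def approx_triples_def by blast
qed

theorem lemma6:
  fixes t0 t0' :: trm
  assumes "closed t0" and "closed t0'" and "step t0 t0'"
  shows "approx_empty t0 t0'"
  using assms joinable_approx_empty by blast

end
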